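(* Let $G$ be a finite, simple, undirected, connected graph with $n$ vertices. Then $\gamma_3(G)+\kappa(G)=2n-2$ if and only if $G$ is isomorphic to $K_4$, $C_4$ or $K_{1,2}$.
   Context: In a graph $G=(V,E)$, a vertex dominates itself and its neighbours. A set $S\subseteq V$ is a three dominating set of $G$ if every vertex in $V\setminus S$ is dominated by at least three vertices of $S$ (equivalently, every vertex of $V\setminus S$ has at least three neighbours in $S$). The three domination number $\gamma_3(G)$ is the minimum cardinality of a three dominating set of $G$. The connectivity $\kappa(G)$ of a connected graph $G$ is the minimum number of vertices whose removal results in a disconnected or trivial (one-vertex) graph; in particular $\kappa(K_n)=n-1$. $C_n$ denotes the cycle on $n$ vertices and $K_{m,n}$ the complete bipartite graph with parts of sizes $m$ and $n$. *)

theory Defs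
  imports Main
begin

definition sgraph :: "'a set \<Rightarrow> ('a \<Rightarrow> 'a \<Rightarrow> bool) \<Rightarrow> bool" where
  "sgraph V E \<longleftrightarrow> finite V \<and> (\<forall>u v. E u v \<longrightarrow> u \<in> V \<and> v \<in> V)
     \<and> (\<forall>u v. E u v \<longrightarrow> E v u) \<and> (\<forall>v. \<not> E v v)"

definition gconnected :: "'a set \<Rightarrow> ('a \<Rightarrow> 'a \<Rightarrow> bool) \<Rightarrow> bool" where
  "gconnected W E \<longleftrightarrow> W \<noteq> {} \<and>
     (\<forall>u\<in>W. \<forall>v\<in>W. (\<lambda>x y. E x y \<and> x \<in> W \<and> y \<in> W)\<^sup>*\<^sup>* u v)"

definition three_dominating :: "'a set \<Rightarrow> ('a \<Rightarrow> 'a \<Rightarrow> bool) \<Rightarrow> 'a set \<Rightarrow> bool" where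
  "three_dominating V E S \<longleftrightarrow> S \<subseteq> V \<and> (\<forall>v \<in> V - S. card {u \<in> S. E v u} \<ge> 3)"

definition gamma3 :: "'a set \<Rightarrow> ('a \<Rightarrow> 'a \<Rightarrow> bool) \<Rightarrow> nat" where
  "gamma3 V E = Min (card ` {S. three_dominating V E S})"

definition kappa :: "'a set \<Rightarrow> ('a \<Rightarrow> 'a \<Rightarrow> bool) \<Rightarrow> nat" where
  "kappa V E = Min (card ` {S. S \<subseteq> V \<and> (\<not> gconnected (V - S) E \<or> card (V - S) = 1)})"

definition graph_iso :: "'a set \<Rightarrow> ('a \<Rightarrow> 'a \<Rightarrow> bool) \<Rightarrow> 'b set \<Rightarrow> ('b \<Rightarrow> 'b \<Rightarrow> bool) \<Rightarrow> bool" where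
  "graph_iso V E W F \<longleftrightarrow> (\<exists>f. bij_betw f V W \<and> (\<forall>u\<in>V. \<forall>v\<in>V. E u v \<longleftrightarrow> F (f u) (f v)))"

definition K4_V :: "nat set" where "K4_V = {0..<4}"
definition K4_E :: "nat \<Rightarrow> nat \<Rightarrow> bool" where
  "K4_E u v \<longleftrightarrow> u \<in> K4_V \<and> v \<in> K4_V \<and> u \<noteq> v"

definition C4_V :: "nat set" where "C4_V = {0..<4}"
definition C4_E :: "nat \<Rightarrow> nat \<Rightarrow> bool" where
  "C4_E u v \<longleftrightarrow> u \<in> C4_V \<and> v \<in> C4_V \<and> ((u + 1) mod 4 = v \<or> (v + 1) mod 4 = u)"

definition K12_V :: "nat set" where "K12_V = {0, 1, 2}"
definition K12_E :: "nat \<Rightarrow> nat \<Rightarrow> bool" where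
  "K12_E u v \<longleftrightarrow> u \<in> K12_V \<and> v \<in> K12_V \<and> ((u = 0 \<and> v \<noteq> 0) \<or> (v = 0 \<and> u \<noteq> 0))"

end

theory Submission
  imports Defs
begin

text \<open>Always \<open>\<gamma>\<^sub>3 \<le> n\<close>, with equality iff the maximum degree is at most 2, since a vertex
  of degree at least 3 is three dominated by all the other vertices; and \<open>\<kappa> \<le> n - 1\<close>, with
  equality iff \<open>G\<close> is complete, because otherwise the neighbourhood of a vertex \<open>u\<close> with a
  non-neighbour separates \<open>u\<close> from it, giving \<open>\<kappa> \<le> deg u \<le> n - 2\<close>.
  For \<open>K\<^sub>n\<close> one has \<open>\<gamma>\<^sub>3 = min n 3\<close>, so the sum is \<open>2n - 2\<close> only for \<open>n = 4\<close>.
  Otherwise the sum forces \<open>\<gamma>\<^sub>3 = n\<close> and \<open>n - 2 = \<kappa> \<le> deg u \<le> 2\<close>, so \<open>n \<le> 4\<close>; the only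
  connected non-complete graphs of maximum degree 2 left are the path on three vertices and,
  when \<open>\<kappa> = 2\<close>, the 4-cycle.\<close>

definition degree :: "('a \<Rightarrow> 'a \<Rightarrow> bool) \<Rightarrow> 'a \<Rightarrow> nat" where
  "degree E v = card {w. E v w}"

lemma sgraph_sym: "sgraph V E \<Longrightarrow> E u v \<longleftrightarrow> E v u"
  by (auto simp: sgraph_def)

lemma sgraph_irrefl: "sgraph V E \<Longrightarrow> \<not> E v v"
  by (simp add: sgraph_def)

lemma neighbours_subset: "sgraph V E \<Longrightarrow> {w. E v w} \<subseteq> V - {v}"
  by (auto simp: sgraph_def)

lemma finite_neighbours: "sgraph V E \<Longrightarrow> finite {w. E v w}"
  by (meson finite_Diff finite_subset neighbours_subset sgraph_def)

lemma degree_le_card_minus_one: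
  assumes "sgraph V E" "v \<in> V"
  shows "degree E v \<le> card V - 1"
proof -
  have "degree E v \<le> card (V - {v})"
    unfolding degree_def using assms by (intro card_mono neighbours_subset) (auto simp: sgraph_def)
  then show ?thesis using assms by (simp add: sgraph_def)
qed

lemma degree_le_card_minus_two:
  assumes G: "sgraph V E" and "u \<in> V" "v \<in> V" "u \<noteq> v" "\<not> E u v"
  shows "degree E u \<le> card V - 2"
proof -
  have "{w. E u w} \<subseteq> V - {u, v}" using neighbours_subset[OF G, of u] assms(5) by blast
  then have "degree E u \<le> card (V - {u, v})"
    unfolding degree_def using G by (intro card_mono) (auto simp: sgraph_def)
  then show ?thesis using assms G by (simp add: sgraph_def card_Diff_subset)
qed

section \<open>Three domination\<close>

lemma finite_three_dominating: "sgraph V E \<Longrightarrow> finite {S. three_dominating V E S}"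
  by (rule finite_subset[of _ "Pow V"]) (auto simp: three_dominating_def sgraph_def)

lemma three_dominating_self: "three_dominating V E V"
  by (simp add: three_dominating_def)

lemma gamma3_le: "sgraph V E \<Longrightarrow> three_dominating V E S \<Longrightarrow> gamma3 V E \<le> card S"
  unfolding gamma3_def by (intro Min_le) (auto intro: finite_three_dominating)

lemma gamma3_attained:
  assumes "sgraph V E"
  shows "\<exists>S. three_dominating V E S \<and> gamma3 V E = card S"
proof -
  have "gamma3 V E \<in> card ` {S. three_dominating V E S}"
    unfolding gamma3_def using finite_three_dominating[OF assms] three_dominating_self
    by (intro Min_in) auto
  then show ?thesis by auto
qed

lemma gamma3_le_card: "sgraph V E \<Longrightarrow> gamma3 V E \<le> card V"
  using gamma3_le three_dominating_self by blast

lemma three_le_degree_if_dominated: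
  assumes "sgraph V E" "three_dominating V E S" "v \<in> V - S"
  shows "3 \<le> degree E v"
proof -
  have "3 \<le> card {u \<in> S. E v u}" using assms(2,3) by (simp add: three_dominating_def)
  also have "\<dots> \<le> degree E v"
    unfolding degree_def by (intro card_mono finite_neighbours[OF assms(1)]) auto
  finally show ?thesis .
qed

lemma gamma3_eq_card:
  assumes G: "sgraph V E" and "\<forall>v\<in>V. degree E v \<le> 2"
  shows "gamma3 V E = card V"
proof -
  obtain S where S: "three_dominating V E S" "gamma3 V E = card S"
    using gamma3_attained[OF G] by blast
  have "V - S = {}"
  proof (rule ccontr)
    assume "V - S \<noteq> {}"
    then obtain v where "v \<in> V - S" by blast
    then show False using three_le_degree_if_dominated[OF G S(1)] assms(2) by fastforce
  qed
  with S show ?thesis by (auto simp: three_dominating_def)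
qed

lemma gamma3_le_card_minus_one:
  assumes G: "sgraph V E" and "v \<in> V" "3 \<le> degree E v"
  shows "gamma3 V E \<le> card V - 1"
proof -
  have "{u \<in> V - {v}. E v u} = {w. E v w}" using G by (auto simp: sgraph_def)
  then have "three_dominating V E (V - {v})"
    using assms(2,3) unfolding three_dominating_def degree_def by (simp add: Diff_Diff_Int)
  then have "gamma3 V E \<le> card (V - {v})" by (rule gamma3_le[OF G])
  then show ?thesis using assms(2) G by (simp add: sgraph_def)
qed

lemma three_le_gamma3:
  assumes G: "sgraph V E" and "3 \<le> card V"
  shows "3 \<le> gamma3 V E"
proof -
  obtain S where S: "three_dominating V E S" "gamma3 V E = card S"
    using gamma3_attained[OF G] by blast
  show ?thesis
  proof (cases "S = V")
    case False
    then obtain v where "v \<in> V - S" using S(1) by (auto simp: three_dominating_def)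
    then have "3 \<le> card {u \<in> S. E v u}" using S(1) by (simp add: three_dominating_def)
    also have "\<dots> \<le> card S"
      using S(1) G by (intro card_mono) (auto simp: three_dominating_def sgraph_def finite_subset)
    finally show ?thesis using S(2) by simp
  qed (use S assms in simp)
qed

lemma gamma3_complete:
  assumes G: "sgraph V E" and complete: "\<forall>u\<in>V. \<forall>v\<in>V. u \<noteq> v \<longrightarrow> E u v"
    and "3 \<le> card V"
  shows "gamma3 V E = 3"
proof -
  obtain T where T: "T \<subseteq> V" "card T = 3" using obtain_subset_with_card_n[OF assms(3)] by blast
  have "{u \<in> T. E w u} = T" if w: "w \<in> V - T" for w
  proof -
    have "E w x" if "x \<in> T" for x
    proof -
      have "x \<in> V" "w \<in> V" "w \<noteq> x" using that T(1) w by auto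
      then show ?thesis using complete by simp
    qed
    then show ?thesis by blast
  qed
  then have "three_dominating V E T" using T by (simp add: three_dominating_def)
  then have "gamma3 V E \<le> 3" using gamma3_le[OF G] T(2) by metis
  then show ?thesis using three_le_gamma3[OF G assms(3)] by simp
qed

section \<open>Connectivity\<close>

definition disconnecting :: "'a set \<Rightarrow> ('a \<Rightarrow> 'a \<Rightarrow> bool) \<Rightarrow> 'a set \<Rightarrow> bool" where
  "disconnecting V E S \<longleftrightarrow> S \<subseteq> V \<and> (\<not> gconnected (V - S) E \<or> card (V - S) = 1)"

lemma kappa_eq_Min: "kappa V E = Min (card ` {S. disconnecting V E S})"
  by (simp add: kappa_def disconnecting_def)

lemma finite_disconnecting: "sgraph V E \<Longrightarrow> finite {S. disconnecting V E S}"
  by (rule finite_subset[of _ "Pow V"]) (auto simp: disconnecting_def sgraph_def)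

lemma kappa_le: "sgraph V E \<Longrightarrow> disconnecting V E S \<Longrightarrow> kappa V E \<le> card S"
  unfolding kappa_eq_Min by (intro Min_le) (auto intro: finite_disconnecting)

lemma kappa_ge:
  assumes G: "sgraph V E"
    and "\<And>S. S \<subseteq> V \<Longrightarrow> card S < k \<Longrightarrow> gconnected (V - S) E \<and> card (V - S) \<noteq> 1"
  shows "k \<le> kappa V E"
proof -
  have "disconnecting V E V" by (simp add: disconnecting_def gconnected_def)
  then have "kappa V E \<in> card ` {S. disconnecting V E S}"
    unfolding kappa_eq_Min using finite_disconnecting[OF G] by (intro Min_in) auto
  then obtain S where S: "S \<subseteq> V" "\<not> gconnected (V - S) E \<or> card (V - S) = 1"
    "kappa V E = card S" by (auto simp: disconnecting_def)
  show ?thesis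
  proof (rule ccontr)
    assume "\<not> k \<le> kappa V E"
    then show False using assms(2)[OF S(1)] S(2,3) by simp
  qed
qed

lemma kappa_le_card_minus_one:
  assumes "sgraph V E" "v \<in> V"
  shows "kappa V E \<le> card V - 1"
proof -
  have "disconnecting V E (V - {v})" using assms(2) by (simp add: disconnecting_def Diff_Diff_Int)
  then show ?thesis using kappa_le[OF assms(1)] assms by (fastforce simp: sgraph_def)
qed

lemma kappa_le_degree:
  assumes G: "sgraph V E" and uv: "u \<in> V" "v \<in> V" "u \<noteq> v" "\<not> E u v"
  shows "kappa V E \<le> degree E u"
proof -
  let ?W = "V - {w. E u w}"
  let ?R = "\<lambda>x y. E x y \<and> x \<in> ?W \<and> y \<in> ?W"
  have "u \<in> ?W" "v \<in> ?W" using uv G by (auto simp: sgraph_def)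
  moreover have "\<not> ?R\<^sup>*\<^sup>* u v"
  proof
    assume "?R\<^sup>*\<^sup>* u v"
    then show False by (rule converse_rtranclpE) (use uv in auto)
  qed
  ultimately have "disconnecting V E {w. E u w}"
    using G by (auto simp: disconnecting_def gconnected_def sgraph_def)
  then show ?thesis using kappa_le[OF G] by (simp add: degree_def)
qed

lemma gconnected_complete:
  assumes "W \<noteq> {}" "\<forall>u\<in>W. \<forall>v\<in>W. u \<noteq> v \<longrightarrow> E u v"
  shows "gconnected W E"
proof -
  have "(\<lambda>x y. E x y \<and> x \<in> W \<and> y \<in> W)\<^sup>*\<^sup>* u v" if "u \<in> W" "v \<in> W" for u v
    using that assms(2) by (cases "u = v") (auto intro: r_into_rtranclp)
  then show ?thesis using assms(1) by (simp add: gconnected_def)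
qed

lemma gconnected_insert:
  assumes G: "sgraph V E" and W: "gconnected W E" and "w \<in> W" "E z w"
  shows "gconnected (insert z W) E"
proof -
  let ?R = "\<lambda>x y. E x y \<and> x \<in> insert z W \<and> y \<in> insert z W"
  have mono: "(\<lambda>x y. E x y \<and> x \<in> W \<and> y \<in> W) \<le> ?R" by auto
  have in_W: "?R\<^sup>*\<^sup>* x y" if "x \<in> W" "y \<in> W" for x y
    using W that unfolding gconnected_def by (blast intro: rtranclp_mono[OF mono, THEN predicate2D])
  have "?R z w" "?R w z" using assms sgraph_sym[OF G] by auto
  then have to_z: "?R\<^sup>*\<^sup>* z y \<and> ?R\<^sup>*\<^sup>* y z" if "y \<in> W" for y
    using in_W[OF \<open>w \<in> W\<close> that] in_W[OF that \<open>w \<in> W\<close>]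
    by (blast intro: converse_rtranclp_into_rtranclp rtranclp.rtrancl_into_rtrancl)
  show ?thesis unfolding gconnected_def
  proof (intro conjI ballI)
    fix x y assume "x \<in> insert z W" "y \<in> insert z W"
    then show "?R\<^sup>*\<^sup>* x y" using in_W to_z by (elim insertE) auto
  qed simp
qed

lemma gconnected_path:
  assumes "sgraph V E" "xs \<noteq> []" "successively E xs"
  shows "gconnected (set xs) E"
  using assms(2,3)
proof (induction xs rule: induct_list012)
  case (3 x y zs)
  then have "gconnected (set (y # zs)) E" "E x y" by simp_all
  from gconnected_insert[OF assms(1) this(1) _ this(2)] show ?case by simp
qed (auto simp: gconnected_def)

lemma kappa_complete:
  assumes G: "sgraph V E" and complete: "\<forall>u\<in>V. \<forall>v\<in>V. u \<noteq> v \<longrightarrow> E u v" and "V \<noteq> {}"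
  shows "kappa V E = card V - 1"
proof -
  have "card V - 1 \<le> kappa V E"
  proof (rule kappa_ge[OF G])
    fix S assume "S \<subseteq> V" "card S < card V - 1"
    then have "2 \<le> card (V - S)" using G by (simp add: card_Diff_subset sgraph_def finite_subset)
    then show "gconnected (V - S) E \<and> card (V - S) \<noteq> 1"
      using complete by (auto intro!: gconnected_complete)
  qed
  then show ?thesis using kappa_le_card_minus_one[OF G] assms(3) by fastforce
qed

lemma gconnected_has_neighbour:
  assumes "gconnected V E" "u \<in> V" "v \<in> V" "u \<noteq> v"
  shows "\<exists>w\<in>V. E u w"
proof -
  have "(\<lambda>x y. E x y \<and> x \<in> V \<and> y \<in> V)\<^sup>*\<^sup>* u v" using assms by (auto simp: gconnected_def)
  then show ?thesis by (rule converse_rtranclpE) (use assms in auto)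
qed

section \<open>The three extremal graphs\<close>

text \<open>Each edge is listed in one direction only; for a simple graph on the listed vertices
  this determines \<open>E\<close> completely.\<close>

definition complete4 :: "'a set \<Rightarrow> ('a \<Rightarrow> 'a \<Rightarrow> bool) \<Rightarrow> 'a \<Rightarrow> 'a \<Rightarrow> 'a \<Rightarrow> 'a \<Rightarrow> bool" where
  "complete4 V E a b c d \<longleftrightarrow> distinct [a, b, c, d] \<and> V = {a, b, c, d} \<and>
     E a b \<and> E a c \<and> E a d \<and> E b c \<and> E b d \<and> E c d"

definition cycle4 :: "'a set \<Rightarrow> ('a \<Rightarrow> 'a \<Rightarrow> bool) \<Rightarrow> 'a \<Rightarrow> 'a \<Rightarrow> 'a \<Rightarrow> 'a \<Rightarrow> bool" where
  "cycle4 V E a b c d \<longleftrightarrow> distinct [a, b, c, d] \<and> V = {a, b, c, d} \<and>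
     E a b \<and> E b c \<and> E c d \<and> E d a \<and> \<not> E a c \<and> \<not> E b d"

definition path3 :: "'a set \<Rightarrow> ('a \<Rightarrow> 'a \<Rightarrow> bool) \<Rightarrow> 'a \<Rightarrow> 'a \<Rightarrow> 'a \<Rightarrow> bool" where
  "path3 V E a b c \<longleftrightarrow> distinct [a, b, c] \<and> V = {a, b, c} \<and> E a b \<and> E b c \<and> \<not> E a c"

lemma graph_iso_iff_enumeration:
  "graph_iso V E {..<k} F \<longleftrightarrow>
     (\<exists>xs. length xs = k \<and> distinct xs \<and> V = set xs \<and> (\<forall>i<k. \<forall>j<k. E (xs!i) (xs!j) \<longleftrightarrow> F i j))"
proof
  assume "graph_iso V E {..<k} F"
  then obtain f where f: "bij_betw f V {..<k}" "\<forall>u\<in>V. \<forall>v\<in>V. E u v \<longleftrightarrow> F (f u) (f v)"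
    by (auto simp: graph_iso_def)
  define g where "g = inv_into V f"
  have g: "bij_betw g {..<k} V" unfolding g_def by (rule bij_betw_inv_into[OF f(1)])
  have fg: "f (g i) = i" if "i < k" for i
    using f(1) that unfolding g_def by (simp add: bij_betw_inv_into_right)
  show "\<exists>xs. length xs = k \<and> distinct xs \<and> V = set xs \<and> (\<forall>i<k. \<forall>j<k. E (xs!i) (xs!j) \<longleftrightarrow> F i j)"
  proof (intro exI conjI allI impI)
    show "distinct (map g [0..<k])" using g by (simp add: distinct_map bij_betw_def atLeast0LessThan)
    show "V = set (map g [0..<k])" using g by (simp add: bij_betw_def atLeast0LessThan)
    fix i j assume "i < k" "j < k"
    then show "E (map g [0..<k] ! i) (map g [0..<k] ! j) \<longleftrightarrow> F i j"
      using f(2) fg g by (simp add: bij_betw_apply)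
  qed simp
next
  assume "\<exists>xs. length xs = k \<and> distinct xs \<and> V = set xs \<and> (\<forall>i<k. \<forall>j<k. E (xs!i) (xs!j) \<longleftrightarrow> F i j)"
  then obtain xs where xs: "length xs = k" "distinct xs" "V = set xs"
    "\<forall>i<k. \<forall>j<k. E (xs!i) (xs!j) \<longleftrightarrow> F i j" by blast
  have b: "bij_betw (nth xs) {..<k} V" using xs by (intro bij_betw_nth) auto
  define f where "f = inv_into {..<k} (nth xs)"
  have f: "bij_betw f V {..<k}" unfolding f_def by (rule bij_betw_inv_into[OF b])
  have "E u v \<longleftrightarrow> F (f u) (f v)" if "u \<in> V" "v \<in> V" for u v
  proof -
    have "f u < k" "f v < k" using f that by (auto dest: bij_betw_apply)
    moreover have "xs ! f u = u" "xs ! f v = v"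
      using b that unfolding f_def by (auto simp: bij_betw_inv_into_right)
    ultimately show ?thesis using xs(4) by metis
  qed
  with f show "graph_iso V E {..<k} F" by (auto simp: graph_iso_def)
qed

lemma ex_length_3: "(\<exists>xs. length xs = 3 \<and> P xs) \<longleftrightarrow> (\<exists>a b c. P [a, b, c])"
  by (simp add: numeral_eq_Suc length_Suc_conv) blast

lemma ex_length_4: "(\<exists>xs. length xs = 4 \<and> P xs) \<longleftrightarrow> (\<exists>a b c d. P [a, b, c, d])"
  by (simp add: numeral_eq_Suc length_Suc_conv) blast

lemma all_less_3: "(\<forall>i<3::nat. P i) \<longleftrightarrow> P 0 \<and> P 1 \<and> P 2"
  by (auto simp: less_Suc_eq numeral_eq_Suc)

lemma all_less_4: "(\<forall>i<4::nat. P i) \<longleftrightarrow> P 0 \<and> P 1 \<and> P 2 \<and> P 3"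
  by (auto simp: less_Suc_eq numeral_eq_Suc)

lemma graph_iso_K4_iff:
  assumes G: "sgraph V E"
  shows "graph_iso V E K4_V K4_E \<longleftrightarrow> (\<exists>a b c d. complete4 V E a b c d)"
proof -
  have edges: "(\<forall>i<4. \<forall>j<4. E ([a, b, c, d] ! i) ([a, b, c, d] ! j) \<longleftrightarrow> K4_E i j) \<longleftrightarrow>
      E a b \<and> E a c \<and> E a d \<and> E b c \<and> E b d \<and> E c d" for a b c d
    using sgraph_irrefl[OF G] sgraph_sym[OF G, of b a] sgraph_sym[OF G, of c a]
      sgraph_sym[OF G, of d a] sgraph_sym[OF G, of c b] sgraph_sym[OF G, of d b]
      sgraph_sym[OF G, of d c]
    by (simp add: all_less_4 K4_E_def K4_V_def) argo
  have V: "K4_V = {..<4}" by (auto simp: K4_V_def)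
  show ?thesis
    unfolding V graph_iso_iff_enumeration ex_length_4 complete4_def edges list.set ..
qed

lemma graph_iso_C4_iff:
  assumes G: "sgraph V E"
  shows "graph_iso V E C4_V C4_E \<longleftrightarrow> (\<exists>a b c d. cycle4 V E a b c d)"
proof -
  have edges: "(\<forall>i<4. \<forall>j<4. E ([a, b, c, d] ! i) ([a, b, c, d] ! j) \<longleftrightarrow> C4_E i j) \<longleftrightarrow>
      E a b \<and> E b c \<and> E c d \<and> E d a \<and> \<not> E a c \<and> \<not> E b d" for a b c d
    using sgraph_irrefl[OF G] sgraph_sym[OF G, of b a] sgraph_sym[OF G, of c b]
      sgraph_sym[OF G, of d c] sgraph_sym[OF G, of a d] sgraph_sym[OF G, of c a]
      sgraph_sym[OF G, of d b]
    by (simp add: all_less_4 C4_E_def C4_V_def) argo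
  have V: "C4_V = {..<4}" by (auto simp: C4_V_def)
  show ?thesis
    unfolding V graph_iso_iff_enumeration ex_length_4 cycle4_def edges list.set ..
qed

lemma graph_iso_K12_iff:
  assumes G: "sgraph V E"
  shows "graph_iso V E K12_V K12_E \<longleftrightarrow> (\<exists>a b c. path3 V E a b c)"
proof -
  \<comment> \<open>vertex 0 is the centre of \<open>K\<^sub>1\<^sub>,\<^sub>2\<close>, so the middle vertex of the path comes first\<close>
  have edges: "(\<forall>i<3. \<forall>j<3. E ([b, a, c] ! i) ([b, a, c] ! j) \<longleftrightarrow> K12_E i j) \<longleftrightarrow>
      E a b \<and> E b c \<and> \<not> E a c" for a b c
    using sgraph_irrefl[OF G] sgraph_sym[OF G, of b a] sgraph_sym[OF G, of c a]
      sgraph_sym[OF G, of c b]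
    by (simp add: all_less_3 K12_E_def K12_V_def) argo
  have V: "K12_V = {..<3}" by (auto simp: K12_V_def)
  show ?thesis
    unfolding V graph_iso_iff_enumeration ex_length_3 path3_def edges list.set
  proof (intro iffI; elim exE conjE)
    fix b a c assume "distinct [b, a, c]" "V = {b, a, c}" "E a b" "E b c" "\<not> E a c"
    then have "distinct [a, b, c] \<and> V = {a, b, c} \<and> E a b \<and> E b c \<and> \<not> E a c"
      by (auto simp: insert_commute)
    then show "\<exists>a b c. distinct [a, b, c] \<and> V = {a, b, c} \<and> E a b \<and> E b c \<and> \<not> E a c"
      by blast
  next
    fix a b c assume "distinct [a, b, c]" "V = {a, b, c}" "E a b" "E b c" "\<not> E a c"
    then have "distinct [b, a, c] \<and> V = {b, a, c} \<and> E a b \<and> E b c \<and> \<not> E a c"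
      by (auto simp: insert_commute)
    then show "\<exists>b a c. distinct [b, a, c] \<and> V = {b, a, c} \<and> E a b \<and> E b c \<and> \<not> E a c"
      by blast
  qed
qed

lemma gamma3_plus_kappa_complete4:
  assumes G: "sgraph V E" and "complete4 V E a b c d"
  shows "gamma3 V E + kappa V E = 2 * card V - 2"
proof -
  have n: "card V = 4" using assms(2) by (simp add: complete4_def)
  have "\<forall>u\<in>V. \<forall>v\<in>V. u \<noteq> v \<longrightarrow> E u v"
    using assms(2) sgraph_sym[OF G] unfolding complete4_def by auto
  then show ?thesis using gamma3_complete[OF G] kappa_complete[OF G] n by fastforce
qed

lemma gamma3_plus_kappa_cycle4:
  assumes G: "sgraph V E" and cyc: "cycle4 V E a b c d"
  shows "gamma3 V E + kappa V E = 2 * card V - 2"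
proof -
  have dist: "distinct [a, b, c, d]" and V: "V = {a, b, c, d}"
    and edges: "E a b" "E b c" "E c d" "E d a" "\<not> E a c" "\<not> E b d"
    using cyc by (simp_all add: cycle4_def)
  have n: "card V = 4" using dist V by simp
  have opposite: "z \<in> V \<Longrightarrow> \<exists>y\<in>V. y \<noteq> z \<and> \<not> E z y" for z
    using dist edges sgraph_sym[OF G, of c a] sgraph_sym[OF G, of d b] unfolding V
    by (elim insertE) auto
  have degree_le_2: "degree E z \<le> 2" if "z \<in> V" for z
    using opposite[OF that] degree_le_card_minus_two[OF G that] n by fastforce
  then have "gamma3 V E = 4" using gamma3_eq_card[OF G] n by simp
  moreover have "kappa V E \<le> 2"
  proof -
    have "kappa V E \<le> degree E a" by (rule kappa_le_degree[OF G, of a c]) (use dist edges V in auto)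
    then show ?thesis using degree_le_2[of a] V by simp
  qed
  moreover have "2 \<le> kappa V E"
  proof (rule kappa_ge[OF G])
    have conn: "gconnected {a, b, c, d} E" "gconnected {b, c, d} E" "gconnected {c, d, a} E"
      "gconnected {d, a, b} E" "gconnected {a, b, c} E"
      using gconnected_path[OF G, of "[a, b, c, d]"] gconnected_path[OF G, of "[b, c, d]"]
        gconnected_path[OF G, of "[c, d, a]"] gconnected_path[OF G, of "[d, a, b]"]
        gconnected_path[OF G, of "[a, b, c]"] edges
      by simp_all
    fix S assume S: "S \<subseteq> V" "card S < 2"
    then consider "S = {}" | x where "x \<in> V" "S = {x}"
      using finite_subset[OF S(1)] V by (auto simp: less_2_cases_iff card_1_singleton_iff)
    then show "gconnected (V - S) E \<and> card (V - S) \<noteq> 1"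
    proof cases
      case 1
      then show ?thesis using conn(1) V n by simp
    next
      case 2
      then have "V - S = {b, c, d} \<or> V - S = {c, d, a} \<or> V - S = {d, a, b} \<or> V - S = {a, b, c}"
        using dist unfolding V by (elim insertE) auto
      then have "gconnected (V - S) E" using conn by (elim disjE) simp_all
      moreover have "card (V - S) = 3" using 2 n V by simp
      ultimately show ?thesis by simp
    qed
  qed
  ultimately show ?thesis using n by simp
qed

lemma gamma3_plus_kappa_path3:
  assumes G: "sgraph V E" and "path3 V E a b c"
  shows "gamma3 V E + kappa V E = 2 * card V - 2"
proof -
  have dist: "distinct [a, b, c]" and V: "V = {a, b, c}" and edges: "E a b" "E b c" "\<not> E a c"
    using assms(2) by (simp_all add: path3_def)
  have n: "card V = 3" using dist V by simp
  have "gamma3 V E = 3"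
    using gamma3_eq_card[OF G] degree_le_card_minus_one[OF G] n by simp
  moreover have "kappa V E \<le> 1"
    using kappa_le_degree[OF G, of a c] degree_le_card_minus_two[OF G, of a c] dist edges V n by simp
  moreover have "1 \<le> kappa V E"
  proof (rule kappa_ge[OF G])
    fix S assume "S \<subseteq> V" "card S < 1"
    then have "S = {}" using V by (simp add: finite_subset)
    then show "gconnected (V - S) E \<and> card (V - S) \<noteq> 1"
      using gconnected_path[OF G, of "[a, b, c]"] edges V n by simp
  qed
  ultimately show ?thesis using n by simp
qed

section \<open>Graphs attaining the bound\<close>

lemma card_eq_4_if_complete:
  assumes G: "sgraph V E" and complete: "\<forall>u\<in>V. \<forall>v\<in>V. u \<noteq> v \<longrightarrow> E u v" and "V \<noteq> {}"
    and sum: "gamma3 V E + kappa V E = 2 * card V - 2"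
  shows "card V = 4"
proof -
  have kappa: "kappa V E = card V - 1" using kappa_complete[OF G complete assms(3)] .
  have "0 < card V" using G assms(3) by (simp add: sgraph_def card_gt_0_iff)
  have "3 \<le> card V"
  proof (rule ccontr)
    assume "\<not> 3 \<le> card V"
    then have "\<forall>v\<in>V. degree E v \<le> 2" using degree_le_card_minus_one[OF G] by fastforce
    then have "gamma3 V E = card V" by (rule gamma3_eq_card[OF G])
    then show False using sum kappa \<open>0 < card V\<close> by linarith
  qed
  then show ?thesis using gamma3_complete[OF G complete] sum kappa by linarith
qed

lemma complete4_if_card_eq_4:
  assumes G: "sgraph V E" and complete: "\<forall>u\<in>V. \<forall>v\<in>V. u \<noteq> v \<longrightarrow> E u v" and "card V = 4"
  shows "\<exists>a b c d. complete4 V E a b c d"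
proof -
  obtain a b c d where "distinct [a, b, c, d]" "V = {a, b, c, d}"
    using assms(3) by (simp add: numeral_eq_Suc card_Suc_eq) blast
  then show ?thesis using complete unfolding complete4_def by auto
qed

lemma kappa_and_degree_if_not_complete:
  assumes G: "sgraph V E" and uv: "u \<in> V" "v \<in> V" "u \<noteq> v" "\<not> E u v"
    and sum: "gamma3 V E + kappa V E = 2 * card V - 2"
  shows "kappa V E = card V - 2" and "\<forall>z\<in>V. degree E z \<le> 2"
proof -
  have "kappa V E \<le> card V - 2"
    using kappa_le_degree[OF G uv] degree_le_card_minus_two[OF G uv] by simp
  moreover have "2 \<le> card V"
    using uv G card_mono[of V "{u, v}"] by (simp add: sgraph_def)
  ultimately have gamma3: "gamma3 V E = card V" and "kappa V E = card V - 2"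
    using gamma3_le_card[OF G] sum by linarith+
  then show "kappa V E = card V - 2" by simp
  show "\<forall>z\<in>V. degree E z \<le> 2"
  proof
    fix z assume "z \<in> V"
    show "degree E z \<le> 2"
    proof (rule ccontr)
      assume "\<not> degree E z \<le> 2"
      then have "gamma3 V E \<le> card V - 1" using gamma3_le_card_minus_one[OF G \<open>z \<in> V\<close>] by simp
      then show False using gamma3 \<open>2 \<le> card V\<close> by linarith
    qed
  qed
qed

lemma path3_if_card_eq_3:
  assumes G: "sgraph V E" and "gconnected V E" and "card V = 3"
    and uv: "u \<in> V" "v \<in> V" "u \<noteq> v" "\<not> E u v"
  shows "\<exists>w. path3 V E u w v"
proof -
  obtain w where w: "w \<in> V" "E u w" using gconnected_has_neighbour[OF assms(2) uv(1-3)] by blast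
  have "w \<noteq> u" "w \<noteq> v" using w uv sgraph_irrefl[OF G] by auto
  then have V: "V = {u, w, v}"
    using uv w assms(3) G card_seteq[of V "{u, w, v}"] by (simp add: sgraph_def)
  obtain w' where w': "w' \<in> V" "E v w'" using gconnected_has_neighbour[OF assms(2) uv(2,1)] uv by metis
  have "w' \<noteq> v" "w' \<noteq> u" using w' uv sgraph_irrefl[OF G] sgraph_sym[OF G] by auto
  then have "E w v" using w' V sgraph_sym[OF G] by auto
  then have "path3 V E u w v" using V uv w \<open>w \<noteq> u\<close> \<open>w \<noteq> v\<close> by (simp add: path3_def)
  then show ?thesis ..
qed

lemma two_regular_if_kappa_eq_2:
  assumes G: "sgraph V E" and "card V = 4" and "kappa V E = 2" and "\<forall>z\<in>V. degree E z \<le> 2"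
  shows "\<forall>z\<in>V. degree E z = 2"
proof
  fix z assume z: "z \<in> V"
  show "degree E z = 2"
  proof (cases "\<exists>y\<in>V. y \<noteq> z \<and> \<not> E z y")
    case True
    then show ?thesis using kappa_le_degree[OF G z] assms(3,4) z by fastforce
  next
    case False
    then have "{w. E z w} = V - {z}" using neighbours_subset[OF G, of z] by blast
    then have "degree E z = 3" using z assms(2) by (simp add: degree_def)
    then show ?thesis using bspec[OF assms(4) z] by simp
  qed
qed

lemma cycle4_if_two_regular:
  assumes G: "sgraph V E" and "card V = 4" and regular: "\<forall>z\<in>V. degree E z = 2"
    and uv: "u \<in> V" "v \<in> V" "u \<noteq> v" "\<not> E u v"
  shows "\<exists>x y. cycle4 V E u x v y"
proof -
  have "card (V - {u, v}) = 2" using uv assms(2) G by (simp add: sgraph_def card_Diff_subset)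
  then obtain x y where xy: "V - {u, v} = {x, y}" "x \<noteq> y" by (auto simp: card_2_iff)
  have neighbours_eq: "{w. E z w} = {x, y}" if "z \<in> {u, v}" for z
  proof (rule card_seteq)
    show "{w. E z w} \<subseteq> {x, y}"
      using that neighbours_subset[OF G, of z] uv(4) sgraph_sym[OF G, of v u] xy(1) by blast
    show "card {x, y} \<le> card {w. E z w}"
      using that regular uv xy(2) by (auto simp: degree_def)
  qed simp
  then have edges: "E u x" "E u y" "E v x" "E v y" by auto
  have "x \<in> V" "x \<notin> {u, v}" using xy(1) by blast+
  have "{w. E x w} = {u, v}"
  proof (rule card_seteq[symmetric])
    show "{u, v} \<subseteq> {w. E x w}" using edges sgraph_sym[OF G] by auto
    show "card {w. E x w} \<le> card {u, v}"
      using regular \<open>x \<in> V\<close> uv(3) by (simp add: degree_def)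
  qed (rule finite_neighbours[OF G])
  then have "\<not> E x y" using xy \<open>x \<notin> {u, v}\<close> by auto
  moreover have "V = {u, x, v, y}" using xy(1) uv by blast
  ultimately have "cycle4 V E u x v y"
    using edges sgraph_sym[OF G] xy \<open>x \<notin> {u, v}\<close> uv by (auto simp: cycle4_def)
  then show ?thesis by blast
qed

lemma extremal_if_gamma3_plus_kappa:
  assumes G: "sgraph V E" and conn: "gconnected V E"
    and sum: "gamma3 V E + kappa V E = 2 * card V - 2"
  shows "(\<exists>a b c d. complete4 V E a b c d) \<or> (\<exists>a b c d. cycle4 V E a b c d) \<or>
    (\<exists>a b c. path3 V E a b c)"
proof (cases "\<forall>u\<in>V. \<forall>v\<in>V. u \<noteq> v \<longrightarrow> E u v")
  case True
  have "V \<noteq> {}" using conn by (simp add: gconnected_def)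
  then show ?thesis using complete4_if_card_eq_4[OF G True] card_eq_4_if_complete[OF G True _ sum] by blast
next
  case False
  then obtain u v where uv: "u \<in> V" "v \<in> V" "u \<noteq> v" "\<not> E u v" by blast
  note kappa = kappa_and_degree_if_not_complete(1)[OF G uv sum]
  note degree = kappa_and_degree_if_not_complete(2)[OF G uv sum]
  obtain w where w: "w \<in> V" "E u w" using gconnected_has_neighbour[OF conn uv(1-3)] by blast
  have "w \<noteq> u" "w \<noteq> v" using uv w sgraph_irrefl[OF G] by auto
  then have "card {u, v, w} = 3" using uv by simp
  then have "3 \<le> card V" using uv w G card_mono[of V "{u, v, w}"] by (simp add: sgraph_def)
  moreover have "card V \<le> 4" using kappa_le_degree[OF G uv] degree uv(1) kappa by fastforce
  ultimately consider "card V = 3" | "card V = 4" by linarith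
  then show ?thesis
  proof cases
    case 1
    then show ?thesis using path3_if_card_eq_3[OF G conn _ uv] by blast
  next
    case 2
    then have "\<forall>z\<in>V. degree E z = 2" using two_regular_if_kappa_eq_2[OF G] kappa degree by simp
    then show ?thesis using cycle4_if_two_regular[OF G 2 _ uv] by blast
  qed
qed

theorem theorem3p2:
  fixes V :: "'a set" and E :: "'a \<Rightarrow> 'a \<Rightarrow> bool"
  assumes "sgraph V E" and "gconnected V E"
  shows "gamma3 V E + kappa V E = 2 * card V - 2 \<longleftrightarrow>
    (graph_iso V E K4_V K4_E \<or> graph_iso V E C4_V C4_E \<or> graph_iso V E K12_V K12_E)"
  unfolding graph_iso_K4_iff[OF assms(1)] graph_iso_C4_iff[OF assms(1)] graph_iso_K12_iff[OF assms(1)]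
  using extremal_if_gamma3_plus_kappa[OF assms] gamma3_plus_kappa_complete4[OF assms(1)]
    gamma3_plus_kappa_cycle4[OF assms(1)] gamma3_plus_kappa_path3[OF assms(1)]
  by blast

end
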